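(* Let $n\ge 2$ and let $u\in C^4$ be a $2$-convex solution of $\sigma_2(D^2u)=1$ on an open set in $\mathbb{R}^n$. At any point where $D^2u$ is diagonal with $u_{11}\ge u_{22}\ge\cdots\ge u_{nn}$, one has $$-\sum_{i\neq j}u_{ii1}u_{jj1}\ \ge\ \frac{2(n-1)\,u_{111}^2}{(n-1)u_{11}^2+2(n-2)}.$$
   Context: Subscripts denote partial derivatives, e.g. $u_{ij1}=\partial^3u/\partial x_i\partial x_j\partial x_1$. $\sigma_2(D^2u)$ is the second elementary symmetric function of the eigenvalues of $D^2u$. A function is $2$-convex if the eigenvalues $\lambda$ of its Hessian satisfy $\sigma_1(\lambda)>0$, $\sigma_2(\lambda)>0$ everywhere. *)

theory Defs
  imports "HOL-Analysis.Analysis" "HOL-Library.Numeral_Type"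
begin

definition pd :: "'n::finite \<Rightarrow> (real^'n \<Rightarrow> real) \<Rightarrow> real^'n \<Rightarrow> real" where
  "pd i f x = frechet_derivative f (at x) (axis i 1)"

fun Ck :: "nat \<Rightarrow> (real^'n::finite) set \<Rightarrow> (real^'n \<Rightarrow> real) \<Rightarrow> bool" where
  "Ck 0 S f = continuous_on S f"
| "Ck (Suc k) S f = (f differentiable_on S \<and> (\<forall>i. Ck k S (pd i f)))"

definition hess :: "(real^'n::finite \<Rightarrow> real) \<Rightarrow> real^'n \<Rightarrow> real^'n^'n" where
  "hess u x = (\<chi> i j. pd j (pd i u) x)"

text \<open>Elementary symmetric functions of the eigenvalues of a (symmetric) matrix,
  written as sums of principal minors: sigma_1 = trace, sigma_2 = sum of 2x2 principal minors.\<close>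
definition sigma1 :: "real^'n^'n \<Rightarrow> real" where
  "sigma1 A = (\<Sum>i\<in>UNIV. A $ i $ i)"

definition sigma2 :: "real^('n::{finite,linorder})^('n::{finite,linorder}) \<Rightarrow> real" where
  "sigma2 A = (\<Sum>i\<in>UNIV. \<Sum>j\<in>{j. i < j}. A $ i $ i * A $ j $ j - A $ i $ j * A $ j $ i)"

definition two_convex_on :: "(real^('n::{finite,linorder})) set \<Rightarrow> (real^('n::{finite,linorder}) \<Rightarrow> real) \<Rightarrow> bool" where
  "two_convex_on S u = (\<forall>x\<in>S. sigma1 (hess u x) > 0 \<and> sigma2 (hess u x) > 0)"

end

theory Submission
  imports Defs
begin

text \<open>With \<open>e = (1,\<dots>,1)\<close>, the form \<open>B(v,w) = (e\<cdot>v)(e\<cdot>w) - v\<cdot>w = \<Sum>\<^sub>i\<^sub>\<noteq>\<^sub>j v\<^sub>i w\<^sub>j\<close>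
  is the polarization of \<open>2\<sigma>\<^sub>2\<close> on diagonal matrices, and it has Lorentzian signature.
  At the point \<open>x\<close> put \<open>\<lambda> = diag D\<^sup>2u\<close> and \<open>a = (u\<^sub>1\<^sub>1\<^sub>1, u\<^sub>2\<^sub>2\<^sub>1, \<dots>)\<close>: the equation gives
  \<open>B(\<lambda>,\<lambda>) = 2\<close>, its derivative in direction \<open>x\<^sub>1\<close> gives \<open>B(\<lambda>,a) = 0\<close>, and the left-hand side
  of the claim is \<open>-B(a,a)\<close>. Since \<open>\<lambda>\<close> is timelike (\<open>B(\<lambda>,\<lambda>) > 0\<close>), every vector
  \<open>z\<close> that is \<open>B\<close>-orthogonal to it has \<open>B(z,z) \<le> 0\<close>; applying this to \<open>a - t y\<close>
  for a suitable test vector \<open>y\<close> \<open>B\<close>-orthogonal to \<open>\<lambda>\<close> and optimizing over \<open>t\<close> yields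
  the bound.\<close>

definition lorentz_form :: "'a::real_inner \<Rightarrow> 'a \<Rightarrow> 'a \<Rightarrow> real" where
  "lorentz_form e v w = (e \<bullet> v) * (e \<bullet> w) - v \<bullet> w"

lemma lorentz_form_commute: "lorentz_form e v w = lorentz_form e w v"
  by (simp add: lorentz_form_def inner_commute mult.commute)

lemma lorentz_form_diff_scaleR:
  "lorentz_form e (v - t *\<^sub>R w) (v - t *\<^sub>R w)
     = lorentz_form e v v - 2 * t * lorentz_form e v w + t\<^sup>2 * lorentz_form e w w"
  by (simp add: lorentz_form_def inner_diff_left inner_diff_right inner_commute
      power2_eq_square algebra_simps)

lemma lorentz_form_orthogonal_timelike_nonpos:
  assumes timelike: "lorentz_form e l l > 0" and orth: "lorentz_form e l z = 0"
  shows "lorentz_form e z z \<le> 0"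
proof -
  define w where "w = (e \<bullet> z) *\<^sub>R l - (e \<bullet> l) *\<^sub>R z"
  have "e \<bullet> w = 0"
    by (simp add: w_def inner_diff_right)
  then have "lorentz_form e w w \<le> 0"
    by (simp add: lorentz_form_def)
  moreover have "lorentz_form e w w
      = (e \<bullet> z)\<^sup>2 * lorentz_form e l l + (e \<bullet> l)\<^sup>2 * lorentz_form e z z"
    using orth unfolding w_def
    by (simp add: lorentz_form_def inner_diff_left inner_diff_right inner_commute
        power2_eq_square algebra_simps)
  ultimately have "(e \<bullet> l)\<^sup>2 * lorentz_form e z z \<le> 0"
    using timelike by (smt (verit) mult_nonneg_nonneg zero_le_power2)
  moreover have "(e \<bullet> l)\<^sup>2 > l \<bullet> l"
    using timelike by (simp add: lorentz_form_def power2_eq_square)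
  then have "(e \<bullet> l)\<^sup>2 > 0"
    using inner_ge_zero[of l] by linarith
  ultimately show ?thesis
    by (simp add: mult_le_0_iff)
qed

lemma lorentz_form_orthogonal_estimate:
  fixes e e1 l a :: "'a::real_inner"
  assumes ee: "e \<bullet> e = N" and ee1: "e \<bullet> e1 = 1" and e1e1: "e1 \<bullet> e1 = 1" and N: "N \<ge> 2"
    and ll: "lorentz_form e l l = c" and c: "c > 0" and la: "lorentz_form e l a = 0"
    and l1: "l \<bullet> e1 \<noteq> 0"
  shows "- lorentz_form e a a \<ge> (N - 1) * c * (a \<bullet> e1)\<^sup>2 / ((N - 1) * (l \<bullet> e1)\<^sup>2 + c * (N - 2))"
proof -
  let ?B = "lorentz_form e" and ?l1 = "l \<bullet> e1" and ?a1 = "a \<bullet> e1"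
  define K where "K = (N - 2) / (N - 1) + ?l1\<^sup>2 / c"
  have K: "K > 0"
    unfolding K_def using N c l1 by (simp add: add_nonneg_pos)
  txt \<open>The test vector: \<open>?B y\<close> is the coordinate functional \<open>e1 \<bullet> _\<close> corrected along \<open>l\<close>,
    so that \<open>?B y a = ?a1\<close> while \<open>?B l y = 0\<close>.\<close>
  define y where "y = (1 / (N - 1)) *\<^sub>R e - e1 - (?l1 / c) *\<^sub>R l"
  have By: "?B y v = e1 \<bullet> v - (?l1 / c) * ?B l v" for v
  proof -
    have "?B y v = (1 / (N - 1)) * ?B e v - ?B e1 v - (?l1 / c) * ?B l v"
      unfolding y_def lorentz_form_def by (simp add: inner_diff_left algebra_simps)
    also have "?B e v = (N - 1) * (e \<bullet> v)"
      using ee by (simp add: lorentz_form_def algebra_simps)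
    also have "?B e1 v = e \<bullet> v - e1 \<bullet> v"
      using ee1 by (simp add: lorentz_form_def inner_commute)
    finally show ?thesis
      using N by simp
  qed
  have "?B y l = 0"
    using By[of l] ll c by (simp add: inner_commute)
  then have Bly: "?B l y = 0"
    by (simp add: lorentz_form_commute)
  have "e1 \<bullet> y = 1 / (N - 1) - 1 - ?l1\<^sup>2 / c"
    unfolding y_def using ee1 e1e1 by (simp add: inner_diff_right inner_commute power2_eq_square)
  then have Byy: "?B y y = - K"
    using By[of y] Bly N unfolding K_def by (simp add: field_simps)
  have Bya: "?B y a = ?a1"
    using By[of a] la by (simp add: inner_commute)
  define t where "t = - ?a1 / K"
  have "?B l (a - t *\<^sub>R y) = 0"
    using la Bly by (simp add: lorentz_form_def inner_diff_right algebra_simps)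
  then have "?B (a - t *\<^sub>R y) (a - t *\<^sub>R y) \<le> 0"
    using ll c by (intro lorentz_form_orthogonal_timelike_nonpos[of e l]) auto
  moreover have "?B (a - t *\<^sub>R y) (a - t *\<^sub>R y) = ?B a a + ?a1\<^sup>2 / K"
    using K unfolding lorentz_form_diff_scaleR lorentz_form_commute[of e a y] Bya Byy t_def
    by (simp add: field_simps power2_eq_square)
  moreover have "?a1\<^sup>2 / K = (N - 1) * c * ?a1\<^sup>2 / ((N - 1) * ?l1\<^sup>2 + c * (N - 2))"
    unfolding K_def using N c by (simp add: field_simps)
  ultimately show ?thesis
    by linarith
qed

lemma lorentz_form_ones:
  "lorentz_form (\<chi> i. 1) v w = (\<Sum>i\<in>UNIV. \<Sum>j\<in>UNIV - {i}. v $ i * w $ j)"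
proof -
  have "(\<Sum>i\<in>UNIV. \<Sum>j\<in>UNIV - {i}. v $ i * w $ j) = (\<Sum>i\<in>UNIV. v $ i * sum (($) w) UNIV - v $ i * w $ i)"
    by (intro sum.cong refl) (simp add: sum_distrib_left[symmetric] sum_diff1 algebra_simps)
  then show ?thesis
    by (simp add: lorentz_form_def inner_vec_def sum_subtractf sum_distrib_right)
qed

lemma sum_less_pairs_symmetrize:
  fixes h :: "'n::{finite,linorder} \<Rightarrow> 'n \<Rightarrow> 'a::comm_monoid_add"
  shows "(\<Sum>i\<in>UNIV. \<Sum>j\<in>{j. i < j}. h i j + h j i) = (\<Sum>i\<in>UNIV. \<Sum>j\<in>UNIV - {i}. h i j)"
proof -
  have swap: "(\<Sum>i\<in>UNIV. \<Sum>j\<in>{j. i < j}. h j i) = (\<Sum>i\<in>UNIV. \<Sum>j\<in>{j. j < i}. h i j)"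
    using sum.swap_restrict[of "UNIV::'n set" "UNIV::'n set" "\<lambda>i j. h j i" "\<lambda>i j. i < j"] by simp
  have split: "(\<Sum>j\<in>UNIV - {i}. h i j) = (\<Sum>j\<in>{j. i < j}. h i j) + (\<Sum>j\<in>{j. j < i}. h i j)" for i
  proof -
    have "UNIV - {i} = {j. i < j} \<union> {j. j < i}"
      by auto
    moreover have "sum (h i) ({j. i < j} \<union> {j. j < i})
        = (\<Sum>j\<in>{j. i < j}. h i j) + (\<Sum>j\<in>{j. j < i}. h i j)"
      by (rule sum.union_disjoint) auto
    ultimately show ?thesis
      by (simp only:)
  qed
  have "(\<Sum>i\<in>UNIV. \<Sum>j\<in>{j. i < j}. h i j + h j i)
      = (\<Sum>i\<in>UNIV. \<Sum>j\<in>{j. i < j}. h i j) + (\<Sum>i\<in>UNIV. \<Sum>j\<in>{j. i < j}. h j i)"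
    by (simp only: sum.distrib)
  also have "\<dots> = (\<Sum>i\<in>UNIV. \<Sum>j\<in>UNIV - {i}. h i j)"
    by (simp only: swap split sum.distrib)
  finally show ?thesis .
qed

lemma sigma2_diagonal:
  assumes "\<forall>i j. i \<noteq> j \<longrightarrow> A $ i $ j = 0"
  shows "2 * sigma2 A = lorentz_form (\<chi> i. 1) (\<chi> i. A $ i $ i) (\<chi> i. A $ i $ i)"
proof -
  have "2 * sigma2 A = (\<Sum>i\<in>UNIV. \<Sum>j\<in>{j. i < j}. A $ i $ i * A $ j $ j + A $ j $ j * A $ i $ i)"
    using assms unfolding sigma2_def sum_distrib_left by (intro sum.cong refl) auto
  then show ?thesis
    unfolding sum_less_pairs_symmetrize[of "\<lambda>i j. A $ i $ i * A $ j $ j"] lorentz_form_ones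
    by simp
qed

lemma has_derivative_sigma2:
  assumes "\<And>i j. ((\<lambda>y. A y $ i $ j) has_derivative A' i j) (at x)"
  shows "((\<lambda>y. sigma2 (A y)) has_derivative (\<lambda>h. \<Sum>i\<in>UNIV. \<Sum>j\<in>{j. i < j}.
            (A x $ i $ i * A' j j h + A' i i h * A x $ j $ j)
          - (A x $ i $ j * A' j i h + A' i j h * A x $ j $ i))) (at x)"
  unfolding sigma2_def
  by (intro has_derivative_sum has_derivative_diff has_derivative_mult assms)

lemma has_derivative_sigma2_at_diagonal:
  assumes "\<And>i j. ((\<lambda>y. A y $ i $ j) has_derivative A' i j) (at x)"
    and "\<forall>i j. i \<noteq> j \<longrightarrow> A x $ i $ j = 0"
  shows "((\<lambda>y. sigma2 (A y)) has_derivative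
           (\<lambda>h. lorentz_form (\<chi> i. 1) (\<chi> i. A x $ i $ i) (\<chi> i. A' i i h))) (at x)"
proof -
  have "(\<Sum>i\<in>UNIV. \<Sum>j\<in>{j. i < j}.
            (A x $ i $ i * A' j j h + A' i i h * A x $ j $ j)
          - (A x $ i $ j * A' j i h + A' i j h * A x $ j $ i))
      = lorentz_form (\<chi> i. 1) (\<chi> i. A x $ i $ i) (\<chi> i. A' i i h)" for h
  proof -
    have "(\<Sum>i\<in>UNIV. \<Sum>j\<in>{j. i < j}.
            (A x $ i $ i * A' j j h + A' i i h * A x $ j $ j)
          - (A x $ i $ j * A' j i h + A' i j h * A x $ j $ i))
        = (\<Sum>i\<in>UNIV. \<Sum>j\<in>{j. i < j}. A x $ i $ i * A' j j h + A x $ j $ j * A' i i h)"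
      using assms(2) by (intro sum.cong refl) (auto simp: algebra_simps)
    then show ?thesis
      unfolding sum_less_pairs_symmetrize[of "\<lambda>i j. A x $ i $ i * A' j j h"] lorentz_form_ones
      by simp
  qed
  then show ?thesis
    using has_derivative_sigma2[OF assms(1)] by simp
qed

lemma Ck_Suc_imp_Ck: "Ck (Suc k) S f \<Longrightarrow> Ck k S f"
  by (induction k arbitrary: f) (auto intro: differentiable_imp_continuous_on)

lemma Ck_antimono: "k \<le> m \<Longrightarrow> Ck m S f \<Longrightarrow> Ck k S f"
  using lift_Suc_antimono_le[of "\<lambda>k. Ck k S f"] Ck_Suc_imp_Ck by (metis le_boolD le_boolI)

lemma hess_entry_has_derivative:
  assumes "Ck 3 S u" "open S" "x \<in> S"
  shows "((\<lambda>y. hess u y $ i $ j) has_derivative frechet_derivative (pd j (pd i u)) (at x)) (at x)"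
proof -
  have "pd j (pd i u) differentiable_on S"
    using assms(1) by (simp add: eval_nat_numeral)
  then show ?thesis
    using assms(2,3)
    by (simp add: hess_def differentiable_on_eq_differentiable_at frechet_derivative_works[symmetric])
qed

lemma sigma2_equation_differentiated:
  assumes "open S" "x \<in> S" "Ck 3 S u" "\<forall>y\<in>S. sigma2 (hess u y) = c"
    and "\<forall>i j. i \<noteq> j \<longrightarrow> hess u x $ i $ j = 0"
  shows "lorentz_form (\<chi> i. 1) (\<chi> i. hess u x $ i $ i) (\<chi> i. pd k (pd i (pd i u)) x) = 0"
proof -
  have deriv: "((\<lambda>y. sigma2 (hess u y)) has_derivative
      (\<lambda>h. lorentz_form (\<chi> i. 1) (\<chi> i. hess u x $ i $ i)
              (\<chi> i. frechet_derivative (pd i (pd i u)) (at x) h))) (at x)"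
    using assms by (intro has_derivative_sigma2_at_diagonal hess_entry_has_derivative)
  have "((\<lambda>y. sigma2 (hess u y)) has_derivative (\<lambda>h. 0)) (at x)"
    by (rule has_derivative_transform_within_open[OF has_derivative_const \<open>open S\<close> \<open>x \<in> S\<close>])
       (use assms(4) in auto)
  from fun_cong[OF has_derivative_unique[OF deriv this], of "axis k 1"] show ?thesis
    by (simp add: pd_def)
qed

theorem corollary2p1:
  fixes u :: "real^'n::{finite,wellorder} \<Rightarrow> real"
    and \<Omega> :: "(real^('n::{finite,wellorder})) set"
    and x :: "real^('n::{finite,wellorder})"
    and i1 :: "'n::{finite,wellorder}"
  assumes n2: "CARD('n) \<ge> 2"
    and open_dom: "open \<Omega>"
    and C4: "Ck 4 \<Omega> u"
    and conv: "two_convex_on \<Omega> u"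
    and eqn: "\<forall>y\<in>\<Omega>. sigma2 (hess u y) = 1"
    and xin: "x \<in> \<Omega>"
    and diag: "\<forall>i j. i \<noteq> j \<longrightarrow> hess u x $ i $ j = 0"
    and ordered: "\<forall>i j. i \<le> j \<longrightarrow> hess u x $ j $ j \<le> hess u x $ i $ i"
    and first: "\<forall>j. i1 \<le> j"
  shows "- (\<Sum>i\<in>UNIV. \<Sum>j\<in>UNIV - {i}. pd i1 (pd i (pd i u)) x * pd i1 (pd j (pd j u)) x)
           \<ge> 2 * (real CARD('n) - 1) * (pd i1 (pd i1 (pd i1 u)) x)^2
             / ((real CARD('n) - 1) * (hess u x $ i1 $ i1)^2 + 2 * (real CARD('n) - 2))"
proof -
  define e :: "real^('n::{finite,wellorder})" where "e = (\<chi> i. 1)"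
  define lam :: "real^('n::{finite,wellorder})" where "lam = (\<chi> i. hess u x $ i $ i)"
  define a :: "real^('n::{finite,wellorder})" where "a = (\<chi> i. pd i1 (pd i (pd i u)) x)"
  have ee: "e \<bullet> e = real CARD('n)"
    by (simp add: e_def inner_vec_def)
  have ee1: "e \<bullet> axis i1 1 = 1" and e1e1: "axis i1 1 \<bullet> axis i1 (1::real) = 1"
    by (simp_all add: e_def inner_axis)
  have ll: "lorentz_form e lam lam = 2"
    using sigma2_diagonal[OF diag] eqn xin by (simp add: e_def lam_def)
  have la: "lorentz_form e lam a = 0"
  proof -
    have "Ck 3 \<Omega> u"
      by (rule Ck_antimono[OF _ C4]) simp
    then show ?thesis
      unfolding e_def lam_def a_def using open_dom xin eqn diag
      by (intro sigma2_equation_differentiated[of \<Omega>])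
  qed
  have l1: "lam \<bullet> axis i1 1 > 0"
  proof -
    have "0 < sigma1 (hess u x)"
      using conv xin by (simp add: two_convex_on_def)
    also have "\<dots> \<le> (\<Sum>i\<in>(UNIV::'n set). hess u x $ i1 $ i1)"
      unfolding sigma1_def using ordered first by (intro sum_mono) simp
    finally show ?thesis
      by (simp add: lam_def inner_axis zero_less_mult_iff)
  qed
  have "- lorentz_form e a a \<ge> (real CARD('n) - 1) * 2 * (a \<bullet> axis i1 1)\<^sup>2
      / ((real CARD('n) - 1) * (lam \<bullet> axis i1 1)\<^sup>2 + 2 * (real CARD('n) - 2))"
    using n2 l1 by (intro lorentz_form_orthogonal_estimate[OF ee ee1 e1e1 _ ll _ la]) auto
  then show ?thesis
    by (simp add: lorentz_form_ones e_def a_def lam_def inner_axis mult.commute)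
qed

end
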